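(* Let $R$ be a commutative strongly purified ring. Then $R$ is a purified ring, and every pure ideal of $R$ is a regular ideal.
   Context: A regular ideal is an ideal generated by a set of idempotents. $R$ is strongly purified if for each $f\in R$ there is $n\geq1$ such that $\operatorname{Ann}(f^n)$ is a regular ideal. $R$ is purified if for any distinct minimal prime ideals $\mathfrak p,\mathfrak q$ of $R$ there is an idempotent $e\in\mathfrak p$ with $1-e\in\mathfrak q$. An ideal $I$ is pure if for each $f\in I$ there is $g\in I$ with $f(1-g)=0$. *)

theory Defs
  imports "HOL-Algebra.Algebra"
begin

definition idempotents :: "('a, 'b) ring_scheme \<Rightarrow> 'a set" where
  "idempotents R = {e \<in> carrier R. e \<otimes>\<^bsub>R\<^esub> e = e}"

definition regular_ideal :: "('a, 'b) ring_scheme \<Rightarrow> 'a set \<Rightarrow> bool" where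
  "regular_ideal R I \<longleftrightarrow> (\<exists>E. E \<subseteq> idempotents R \<and> I = genideal R E)"

definition Ann :: "('a, 'b) ring_scheme \<Rightarrow> 'a \<Rightarrow> 'a set" where
  "Ann R f = {x \<in> carrier R. x \<otimes>\<^bsub>R\<^esub> f = \<zero>\<^bsub>R\<^esub>}"

definition strongly_purified :: "('a, 'b) ring_scheme \<Rightarrow> bool" where
  "strongly_purified R \<longleftrightarrow>
     (\<forall>f \<in> carrier R. \<exists>n::nat. n \<ge> 1 \<and> regular_ideal R (Ann R (f [^]\<^bsub>R\<^esub> n)))"

definition minimal_prime :: "('a, 'b) ring_scheme \<Rightarrow> 'a set \<Rightarrow> bool" where
  "minimal_prime R P \<longleftrightarrow> primeideal P R \<and> (\<forall>Q. primeideal Q R \<and> Q \<subseteq> P \<longrightarrow> Q = P)"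

definition purified :: "('a, 'b) ring_scheme \<Rightarrow> bool" where
  "purified R \<longleftrightarrow>
     (\<forall>p q. minimal_prime R p \<and> minimal_prime R q \<and> p \<noteq> q \<longrightarrow>
        (\<exists>e \<in> p. e \<in> idempotents R \<and> \<one>\<^bsub>R\<^esub> \<ominus>\<^bsub>R\<^esub> e \<in> q))"

definition pure_ideal :: "('a, 'b) ring_scheme \<Rightarrow> 'a set \<Rightarrow> bool" where
  "pure_ideal R I \<longleftrightarrow> ideal I R \<and>
     (\<forall>f \<in> I. \<exists>g \<in> I. f \<otimes>\<^bsub>R\<^esub> (\<one>\<^bsub>R\<^esub> \<ominus>\<^bsub>R\<^esub> g) = \<zero>\<^bsub>R\<^esub>)"

end

theory Submission
  imports Defs
begin

text \<open>
  By Krull's lemma, every element \<open>f\<close> of a minimal prime \<open>p\<close> satisfies \<open>s f\<^sup>m = 0\<close> for some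
  \<open>s \<notin> p\<close>. Given distinct minimal primes \<open>p\<close>, \<open>q\<close>, pick \<open>f \<in> p - q\<close>; strong purity makes
  \<open>Ann(f\<^sup>m\<^sup>k)\<close> an ideal generated by idempotents, and as it contains \<open>s\<close>, one of these
  idempotents \<open>e\<close> avoids \<open>p\<close>. Then \<open>e \<in> q\<close> since \<open>e f\<^sup>m\<^sup>k = 0\<close> and \<open>f \<notin> q\<close>, while
  \<open>1 - e \<in> p\<close> since \<open>e (1 - e) = 0\<close>.

  If \<open>I\<close> is pure and \<open>f \<in> I\<close>, say \<open>f (1 - g) = 0\<close> with \<open>g \<in> I\<close>, then the regular ideal
  \<open>Ann((1 - g)\<^sup>n)\<close> contains \<open>f\<close> and lies inside \<open>I\<close>, because \<open>1 - (1 - g)\<^sup>n \<in> I\<close>.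
  Hence \<open>I\<close> is generated by the idempotents it contains.
\<close>

lemma (in cring) ex_maximal_ideal_disjoint:
  assumes "\<zero> \<notin> S"
  obtains M where "ideal M R" "M \<inter> S = {}"
    and "\<And>J. ideal J R \<Longrightarrow> J \<inter> S = {} \<Longrightarrow> M \<subseteq> J \<Longrightarrow> J = M"
proof -
  let ?F = "{I. ideal I R \<and> I \<inter> S = {}}"
  have "\<exists>M\<in>?F. \<forall>J\<in>?F. M \<subseteq> J \<longrightarrow> J = M"
  proof (rule subset_Zorn)
    fix C assume C: "subset.chain ?F C"
    let ?U = "if C = {} then {\<zero>} else \<Union>C"
    have "subset.chain {I. ideal I R} C"
      using C unfolding pred_on.chain_def by blast
    then have "ideal ?U R" by (rule chain_Union_is_ideal)
    moreover have "?U \<inter> S = {}"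
      using C assms unfolding pred_on.chain_def by auto
    moreover have "\<forall>J\<in>C. J \<subseteq> ?U" by auto
    ultimately show "\<exists>U\<in>?F. \<forall>J\<in>C. J \<subseteq> U" by blast
  qed
  then obtain M where "M \<in> ?F" and "\<forall>J\<in>?F. M \<subseteq> J \<longrightarrow> J = M" ..
  then show thesis by (intro that) auto
qed

lemma (in cring) maximal_disjoint_ideal_is_prime:
  assumes S: "submonoid S R"
    and M: "ideal M R" "M \<inter> S = {}"
    and M_max: "\<And>J. ideal J R \<Longrightarrow> J \<inter> S = {} \<Longrightarrow> M \<subseteq> J \<Longrightarrow> J = M"
  shows "primeideal M R"
proof -
  interpret S: submonoid S R by (rule S)
  interpret M: ideal M R by (rule M(1))
  have colon_meets_S: "\<exists>s\<in>S. x \<otimes> s \<in> M"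
    if x: "x \<in> carrier R" and y: "y \<in> carrier R" "y \<notin> M" "x \<otimes> y \<in> M" for x y
  proof -
    let ?J = "{z \<in> carrier R. x \<otimes> z \<in> M}"
    have "ideal ?J R" using M.helper_max_prime[OF is_cring x] .
    moreover have "M \<subseteq> ?J" using x M.I_l_closed M.Icarr by blast
    moreover have "?J \<noteq> M" using y by blast
    ultimately show ?thesis using M_max by blast
  qed
  show ?thesis
  proof (rule primeidealI[OF M(1) is_cring])
    show "carrier R \<noteq> M" using M(2) S.one_closed by blast
    fix a b assume a: "a \<in> carrier R" and b: "b \<in> carrier R" and ab: "a \<otimes> b \<in> M"
    show "a \<in> M \<or> b \<in> M"
    proof (rule ccontr)
      assume "\<not> (a \<in> M \<or> b \<in> M)"
      then have "a \<notin> M" "b \<notin> M" by auto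
      obtain s where s: "s \<in> S" "b \<otimes> s \<in> M"
        using colon_meets_S[OF b a \<open>a \<notin> M\<close>] ab a b m_comm by auto
      have s_carr: "s \<in> carrier R" using s(1) S.subset by blast
      obtain t where t: "t \<in> S" "s \<otimes> t \<in> M"
        using colon_meets_S[OF s_carr b \<open>b \<notin> M\<close>] s(2) b s_carr m_comm by auto
      have "s \<otimes> t \<in> S" using s(1) t(1) by simp
      then show False using t(2) M(2) by blast
    qed
  qed
qed

lemma (in cring) ex_primeideal_disjoint_submonoid:
  assumes "submonoid S R" and "\<zero> \<notin> S"
  shows "\<exists>P. primeideal P R \<and> P \<inter> S = {}"
proof -
  obtain M where "ideal M R" "M \<inter> S = {}"
    and "\<And>J. ideal J R \<Longrightarrow> J \<inter> S = {} \<Longrightarrow> M \<subseteq> J \<Longrightarrow> J = M"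
    using ex_maximal_ideal_disjoint[OF assms(2)] by blast
  then show ?thesis using maximal_disjoint_ideal_is_prime[OF assms(1)] by blast
qed

lemma (in primeideal) nat_pow_notin:
  assumes "a \<in> carrier R" and "a \<notin> I"
  shows "a [^] (n::nat) \<notin> I"
proof (induction n)
  case 0
  show ?case using I_notcarr one_imp_carrier by auto
next
  case (Suc n)
  then show ?case using I_prime[of "a [^] n" a] assms by auto
qed

lemma (in cring) minimal_prime_annihilated_pow:
  assumes p: "minimal_prime R p" and f: "f \<in> p"
  shows "\<exists>s\<in>carrier R - p. \<exists>m::nat. s \<otimes> f [^] m = \<zero>"
proof (rule ccontr)
  assume no_annihilator: "\<not> ?thesis"
  interpret p: primeideal p R using p by (simp add: minimal_prime_def)
  have f_carr: "f \<in> carrier R" using f p.Icarr by blast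
  define S where "S = {s \<otimes> f [^] (k::nat) | s k. s \<in> carrier R - p}"
  have in_S: "s \<otimes> f [^] k \<in> S" if "s \<in> carrier R - p" for s and k :: nat
    using that unfolding S_def by blast
  have one_notin_p: "\<one> \<notin> p" using p.I_notcarr p.one_imp_carrier by blast
  have "submonoid S R"
  proof
    show "S \<subseteq> carrier R" unfolding S_def using f_carr by auto
    show "\<one> \<in> S" using in_S[of \<one> 0] one_notin_p by simp
    fix x y assume "x \<in> S" "y \<in> S"
    then obtain s k t l where x: "x = s \<otimes> f [^] (k::nat)" "s \<in> carrier R - p"
      and y: "y = t \<otimes> f [^] (l::nat)" "t \<in> carrier R - p"
      unfolding S_def by blast
    have "x \<otimes> y = (s \<otimes> t) \<otimes> f [^] (k + l)"
      using x y f_carr by (simp add: nat_pow_mult[symmetric] m_ac)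
    moreover have "s \<otimes> t \<in> carrier R - p" using x y p.I_prime by blast
    ultimately show "x \<otimes> y \<in> S" using in_S by simp
  qed
  moreover have "\<zero> \<notin> S" using no_annihilator unfolding S_def by fastforce
  ultimately obtain P where P: "primeideal P R" "P \<inter> S = {}"
    using ex_primeideal_disjoint_submonoid by blast
  have "P \<subseteq> p"
  proof
    fix x assume "x \<in> P"
    then show "x \<in> p"
      using P(2) in_S[of x 0] primeideal.axioms(1)[OF P(1)] ideal.Icarr by fastforce
  qed
  then have "P = p" using p P(1) by (simp add: minimal_prime_def)
  moreover have "f \<in> S" using in_S[of \<one> 1] one_notin_p f_carr by simp
  ultimately show False using f P(2) by blast
qed

lemma (in cring) Ann_subset_Ann_pow:
  assumes "h \<in> carrier R" and "n \<ge> 1"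
  shows "Ann R h \<subseteq> Ann R (h [^] (n::nat))"
proof
  fix x assume "x \<in> Ann R h"
  then have x: "x \<in> carrier R" "x \<otimes> h = \<zero>" by (auto simp: Ann_def)
  obtain k where n: "n = Suc k" using assms(2) by (cases n) auto
  have "x \<otimes> h [^] n = (x \<otimes> h) \<otimes> h [^] k"
    using x(1) assms(1) by (simp add: n m_ac)
  then show "x \<in> Ann R (h [^] n)" using x assms(1) by (simp add: Ann_def)
qed

lemma (in cring) one_minus_pow_one_minus_mem:
  assumes I: "ideal I R" and g: "g \<in> I"
  shows "\<one> \<ominus> (\<one> \<ominus> g) [^] (n::nat) \<in> I"
proof -
  interpret I: ideal I R by (rule I)
  have g_carr: "g \<in> carrier R" using g I.Icarr by blast
  show ?thesis
  proof (induction n)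
    case 0
    have "\<one> \<ominus> \<one> = \<zero>" by algebra
    then show ?case using I.zero_closed by (simp only: nat_pow_0)
  next
    case (Suc n)
    define x where "x = (\<one> \<ominus> g) [^] n"
    have x_carr: "x \<in> carrier R" unfolding x_def using g_carr by simp
    have "\<one> \<ominus> (\<one> \<ominus> g) [^] Suc n = (\<one> \<ominus> x) \<oplus> x \<otimes> g"
      using x_carr g_carr unfolding x_def[symmetric] nat_pow_Suc by algebra
    moreover have "x \<otimes> g \<in> I" using x_carr g I.I_l_closed by blast
    ultimately show ?case using Suc.IH unfolding x_def by simp
  qed
qed

lemma (in cring) Ann_pow_one_minus_subset:
  assumes I: "ideal I R" and g: "g \<in> I"
  shows "Ann R ((\<one> \<ominus> g) [^] (n::nat)) \<subseteq> I"
proof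
  interpret I: ideal I R by (rule I)
  let ?h = "(\<one> \<ominus> g) [^] n"
  fix x assume "x \<in> Ann R ?h"
  then have x: "x \<in> carrier R" "x \<otimes> ?h = \<zero>" by (auto simp: Ann_def)
  have h_carr: "?h \<in> carrier R" using g I.Icarr by simp
  have "x = x \<otimes> (\<one> \<ominus> ?h) \<oplus> x \<otimes> ?h" using x(1) h_carr by algebra
  then have "x = x \<otimes> (\<one> \<ominus> ?h)" using x h_carr by simp
  moreover have "\<one> \<ominus> ?h \<in> I" by (rule one_minus_pow_one_minus_mem[OF I g])
  ultimately show "x \<in> I" using x(1) I.I_l_closed by metis
qed

lemma (in cring) strongly_purifiedE:
  assumes "strongly_purified R" and "f \<in> carrier R"
  obtains n :: nat and E :: "'a set" where "n \<ge> 1" "E \<subseteq> idempotents R" "Ann R (f [^] n) = Idl E"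
  using assms unfolding strongly_purified_def regular_ideal_def by blast

lemma idempotents_subset_carrier: "idempotents R \<subseteq> carrier R"
  by (auto simp: idempotents_def)

lemma (in cring) one_minus_idempotent:
  assumes "e \<in> idempotents R"
  shows "\<one> \<ominus> e \<in> idempotents R" and "e \<otimes> (\<one> \<ominus> e) = \<zero>"
proof -
  have e: "e \<in> carrier R" "e \<otimes> e = e" using assms by (auto simp: idempotents_def)
  have "e \<otimes> (\<one> \<ominus> e) = e \<ominus> e \<otimes> e" using e(1) by algebra
  also have "\<dots> = \<zero>" using e by algebra
  finally show "e \<otimes> (\<one> \<ominus> e) = \<zero>" .
  have "(\<one> \<ominus> e) \<otimes> (\<one> \<ominus> e) = \<one> \<ominus> e \<ominus> e \<oplus> e \<otimes> e" using e(1) by algebra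
  also have "\<dots> = \<one> \<ominus> e" using e by algebra
  finally show "\<one> \<ominus> e \<in> idempotents R" using e(1) by (simp add: idempotents_def)
qed

lemma (in primeideal) one_minus_idempotent_mem:
  assumes e: "e \<in> idempotents R" and "e \<notin> I"
  shows "\<one> \<ominus> e \<in> I"
proof -
  have e_carr: "e \<in> carrier R" using e by (simp add: idempotents_def)
  have "e \<otimes> (\<one> \<ominus> e) \<in> I"
    using one_minus_idempotent(2)[OF e] additive_subgroup.zero_closed[OF is_additive_subgroup]
    by simp
  then show ?thesis using I_prime[of e "\<one> \<ominus> e"] e_carr assms(2) by simp
qed

lemma (in cring) strongly_purified_pure_ideal_regular:
  assumes sp: "strongly_purified R" and I: "pure_ideal R I"
  shows "regular_ideal R I"
proof -
  have I_ideal: "ideal I R" using I by (simp add: pure_ideal_def)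
  interpret I: ideal I R by (rule I_ideal)
  have "I \<subseteq> Idl (I \<inter> idempotents R)"
  proof
    fix f assume f: "f \<in> I"
    then obtain g where g: "g \<in> I" "f \<otimes> (\<one> \<ominus> g) = \<zero>" using I by (auto simp: pure_ideal_def)
    have h_carr: "\<one> \<ominus> g \<in> carrier R" using g(1) I.Icarr by simp
    obtain n :: nat and E where n: "n \<ge> 1" and E: "E \<subseteq> idempotents R" "Ann R ((\<one> \<ominus> g) [^] n) = Idl E"
      using strongly_purifiedE[OF sp h_carr] by blast
    have "f \<in> Ann R (\<one> \<ominus> g)" using f g(2) I.Icarr by (simp add: Ann_def)
    then have f_in: "f \<in> Idl E" using Ann_subset_Ann_pow[OF h_carr n] E(2) by blast
    have "E \<subseteq> carrier R" using E(1) idempotents_subset_carrier[of R] by blast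
    then have "E \<subseteq> Idl E" by (rule genideal_self)
    then have "E \<subseteq> I \<inter> idempotents R"
      using E Ann_pow_one_minus_subset[OF I_ideal g(1)] by blast
    then have "Idl E \<subseteq> Idl (I \<inter> idempotents R)"
      by (intro subset_Idl_subset) (use idempotents_subset_carrier[of R] in blast)+
    then show "f \<in> Idl (I \<inter> idempotents R)" using f_in by blast
  qed
  moreover have "Idl (I \<inter> idempotents R) \<subseteq> I"
    by (rule genideal_minimal[OF I_ideal]) blast
  ultimately have "I = Idl (I \<inter> idempotents R)" by (rule subset_antisym)
  then show ?thesis unfolding regular_ideal_def by (intro exI[of _ "I \<inter> idempotents R"]) simp
qed

lemma (in cring) strongly_purified_imp_purified:
  assumes sp: "strongly_purified R"
  shows "purified R"
  unfolding purified_def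
proof (intro allI impI)
  fix p q assume pq: "minimal_prime R p \<and> minimal_prime R q \<and> p \<noteq> q"
  interpret p: primeideal p R using pq by (simp add: minimal_prime_def)
  interpret q: primeideal q R using pq by (simp add: minimal_prime_def)
  have "\<not> p \<subseteq> q" using pq q.primeideal by (auto simp: minimal_prime_def)
  then obtain f where f: "f \<in> p" "f \<notin> q" by blast
  have f_carr: "f \<in> carrier R" using f p.Icarr by blast
  obtain s m where s: "s \<in> carrier R" "s \<notin> p" "s \<otimes> f [^] (m::nat) = \<zero>"
    using minimal_prime_annihilated_pow[of p f] pq f by blast
  have fm_carr: "f [^] m \<in> carrier R" using f_carr by simp
  obtain k :: nat and E where k: "k \<ge> 1" and E: "E \<subseteq> idempotents R" "Ann R ((f [^] m) [^] k) = Idl E"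
    using strongly_purifiedE[OF sp fm_carr] by blast
  have "s \<in> Ann R (f [^] m)" using s by (simp add: Ann_def)
  then have "s \<in> Idl E" using Ann_subset_Ann_pow[OF fm_carr k] E(2) by blast
  then have "\<not> E \<subseteq> p" using s(2) genideal_minimal[OF p.is_ideal] by blast
  then obtain e where e: "e \<in> E" "e \<notin> p" by blast
  have e_idem: "e \<in> idempotents R" using e(1) E(1) by blast
  then have e_carr: "e \<in> carrier R" by (simp add: idempotents_def)
  have "E \<subseteq> carrier R" using E(1) idempotents_subset_carrier[of R] by blast
  then have "e \<in> Idl E" using e(1) genideal_self by blast
  then have e_ann: "e \<otimes> (f [^] m) [^] k = \<zero>" using E(2)[symmetric] by (simp add: Ann_def)
  have fmk_carr: "(f [^] m) [^] k \<in> carrier R" using fm_carr by simp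
  have "(f [^] m) [^] k \<notin> q"
    using q.nat_pow_notin[OF fm_carr q.nat_pow_notin[OF f_carr f(2)]] .
  then have "e \<in> q" using q.I_prime[OF e_carr fmk_carr] e_ann q.zero_closed by metis
  moreover have "\<one> \<ominus> e \<in> p" using p.one_minus_idempotent_mem[OF e_idem e(2)] .
  moreover have "\<one> \<ominus> (\<one> \<ominus> e) = e" using e_carr by algebra
  ultimately show "\<exists>e'\<in>p. e' \<in> idempotents R \<and> \<one> \<ominus> e' \<in> q"
    using one_minus_idempotent(1)[OF e_idem] by metis
qed

theorem theorem5p10:
  fixes R (structure)
  assumes "cring R" and "strongly_purified R"
  shows "purified R \<and> (\<forall>I. pure_ideal R I \<longrightarrow> regular_ideal R I)"
proof -
  interpret cring R by fact
  show ?thesis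
    using strongly_purified_imp_purified strongly_purified_pure_ideal_regular assms(2) by blast
qed

end
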